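(* Let $G$ be a countable discrete amenable group and $(X,d)$ a compact metric space. Let $\sigma$ be the full $G$-shift on $X^G$, $\sigma^h((x_g)_{g\in G})=(x_{gh})_{g\in G}$, and equip $X^G$ with the metric $\boldsymbol d(x,y)=\sum_{g\in G}\alpha_g\,d(x_g,y_g)$, where $\alpha_g\in(0,\infty)$, $\alpha_{1_G}=1$ and $\sum_{g\in G}\alpha_g<\infty$. Assume the $G$-system $(X^G,\sigma)$ with metric $\boldsymbol d$ satisfies Condition (C). Then $$\overline{\mathrm{mdim}}_{\mathrm M}(X^G,G,\boldsymbol d)=\overline{\dim}_{\mathrm B}(X,d),\qquad\underline{\mathrm{mdim}}_{\mathrm M}(X^G,G,\boldsymbol d)=\underline{\dim}_{\mathrm B}(X,d).$$
   Context: Upper/lower Minkowski (box) dimension: $\overline{\dim}_{\mathrm B}(X,d)=\limsup_{\varepsilon\to0}\frac{\log N(\varepsilon)}{|\log\varepsilon|}$, $\underline{\dim}_{\mathrm B}(X,d)=\liminf_{\varepsilon\to0}\frac{\log N(\varepsilon)}{|\log\varepsilon|}$, where $N(\varepsilon)$ is the maximal cardinality of a subset of $X$ whose distinct points are at $d$-distance $>\varepsilon$. Metric mean dimension of a $G$-system $(Z,G)$ with metric $\rho$: with a Følner sequence $(F_n)$, $\rho_F(x,y)=\max_{g\in F}\rho(gx,gy)$ and $s_F(\rho,\varepsilon,Z)$ the maximal cardinality of a subset of $Z$ whose distinct points have $\rho_F$-distance $>\varepsilon$, $\overline{\mathrm{mdim}}_{\mathrm M}(Z,G,\rho)=\limsup_{\varepsilon\to0}\frac{1}{|\log\varepsilon|}\limsup_n\frac1{|F_n|}\log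 s_{F_n}(\rho,\varepsilon,Z)$ and $\underline{\mathrm{mdim}}_{\mathrm M}$ with $\liminf_{\varepsilon\to0}$ (independent of the Følner sequence). Condition (C) for a $G$-system $(Z,G)$ with metric $\rho$: let $E(Z,G)$ be the set of ergodic $G$-invariant Borel probability measures; for a finite measurable partition $\mathcal P$ let $\partial\mathcal P=\bigcup_{A\in\mathcal P}\partial A$, $\mathrm{diam}(\mathcal P)=\max_{A\in\mathcal P}\mathrm{diam}(A)$, $U_r(A)=\{x\in A:\exists y\in Z\setminus A,\ \rho(x,y)<r\}$, $U_r(\mathcal P)=\bigcup_{A\in\mathcal P}U_r(A)$; for $\mu\in E(Z,G)$ and $\gamma>0$ let $r_{\mu,\gamma}=\sup\{r>0:\exists$ finite measurable partition $\mathcal P$ with $\mu(\partial\mathcal P)=0$, $\mathrm{diam}(\mathcal P)<\gamma$, $\mu(U_r(\mathcal P))<\gamma\}$ and $r_\gamma=\inf_{\mu\in E(Z,G)}r_{\mu,\gamma}$. Condition (C) requires $r_\gamma>0$ for every $\gamma>0$ and $\lim_{\gamma\to0}\frac{\log r_\gamma}{\log\gamma}=1$. *)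

theory Defs
  imports "HOL-Probability.Probability"
begin

definition sep_set :: "'a set \<Rightarrow> ('a \<Rightarrow> 'a \<Rightarrow> real) \<Rightarrow> real \<Rightarrow> 'a set \<Rightarrow> bool" where
  "sep_set Z \<rho> \<epsilon> S \<longleftrightarrow> S \<subseteq> Z \<and> finite S \<and> (\<forall>x\<in>S. \<forall>y\<in>S. x \<noteq> y \<longrightarrow> \<rho> x y > \<epsilon>)"

definition max_sep :: "'a set \<Rightarrow> ('a \<Rightarrow> 'a \<Rightarrow> real) \<Rightarrow> real \<Rightarrow> nat" where
  "max_sep Z \<rho> \<epsilon> = Sup (card ` {S. sep_set Z \<rho> \<epsilon> S})"

definition upper_box_dim :: "'a set \<Rightarrow> ('a \<Rightarrow> 'a \<Rightarrow> real) \<Rightarrow> ereal" where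
  "upper_box_dim X d =
     Limsup (at_right 0) (\<lambda>\<epsilon>. ereal (ln (real (max_sep X d \<epsilon>)) / \<bar>ln \<epsilon>\<bar>))"

definition lower_box_dim :: "'a set \<Rightarrow> ('a \<Rightarrow> 'a \<Rightarrow> real) \<Rightarrow> ereal" where
  "lower_box_dim X d =
     Liminf (at_right 0) (\<lambda>\<epsilon>. ereal (ln (real (max_sep X d \<epsilon>)) / \<bar>ln \<epsilon>\<bar>))"

text \<open>The group G is a type of class group_add (not necessarily commutative, written
  additively: g + h is the product gh, 0 is the identity).\<close>

definition folner_seq :: "(nat \<Rightarrow> 'g::group_add set) \<Rightarrow> bool" where
  "folner_seq F \<longleftrightarrow> (\<forall>n. finite (F n) \<and> F n \<noteq> {}) \<and>
     (\<forall>g. (\<lambda>n. real (card (((+) g ` F n - F n) \<union> (F n - (+) g ` F n))) / real (card (F n)))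
            \<longlonglongrightarrow> 0)"

definition amenable :: "'g::group_add itself \<Rightarrow> bool" where
  "amenable _ \<longleftrightarrow> (\<exists>F :: nat \<Rightarrow> 'g set. folner_seq F)"

definition bowen_metric ::
  "('z \<Rightarrow> 'z \<Rightarrow> real) \<Rightarrow> ('g \<Rightarrow> 'z \<Rightarrow> 'z) \<Rightarrow> 'g set \<Rightarrow> 'z \<Rightarrow> 'z \<Rightarrow> real" where
  "bowen_metric \<rho> T F x y = Max ((\<lambda>g. \<rho> (T g x) (T g y)) ` F)"

definition upper_mdim ::
  "'z set \<Rightarrow> ('g \<Rightarrow> 'z \<Rightarrow> 'z) \<Rightarrow> ('z \<Rightarrow> 'z \<Rightarrow> real) \<Rightarrow> (nat \<Rightarrow> 'g set) \<Rightarrow> ereal" where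
  "upper_mdim Z T \<rho> F =
     Limsup (at_right 0) (\<lambda>\<epsilon>.
       limsup (\<lambda>n. ereal (ln (real (max_sep Z (bowen_metric \<rho> T (F n)) \<epsilon>)) / real (card (F n))))
       * ereal (1 / \<bar>ln \<epsilon>\<bar>))"

definition lower_mdim ::
  "'z set \<Rightarrow> ('g \<Rightarrow> 'z \<Rightarrow> 'z) \<Rightarrow> ('z \<Rightarrow> 'z \<Rightarrow> real) \<Rightarrow> (nat \<Rightarrow> 'g set) \<Rightarrow> ereal" where
  "lower_mdim Z T \<rho> F =
     Liminf (at_right 0) (\<lambda>\<epsilon>.
       limsup (\<lambda>n. ereal (ln (real (max_sep Z (bowen_metric \<rho> T (F n)) \<epsilon>)) / real (card (F n))))
       * ereal (1 / \<bar>ln \<epsilon>\<bar>))"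

definition full_shift_space :: "'a set \<Rightarrow> ('g \<Rightarrow> 'a) set" where
  "full_shift_space X = {x. \<forall>g. x g \<in> X}"

definition shift :: "'g::group_add \<Rightarrow> ('g \<Rightarrow> 'a) \<Rightarrow> ('g \<Rightarrow> 'a)" where
  "shift h x = (\<lambda>g. x (g + h))"

definition shift_metric :: "('g \<Rightarrow> real) \<Rightarrow> ('a \<Rightarrow> 'a \<Rightarrow> real) \<Rightarrow> ('g \<Rightarrow> 'a) \<Rightarrow> ('g \<Rightarrow> 'a) \<Rightarrow> real" where
  "shift_metric \<alpha> d x y = (\<Sum>\<^sub>\<infinity>g. \<alpha> g * d (x g) (y g))"

definition borel_sets_of :: "'a topology \<Rightarrow> 'a set set" where
  "borel_sets_of T = sets (sigma (topspace T) {S. openin T S})"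

definition invariant_prob_measure ::
  "'z set \<Rightarrow> ('g \<Rightarrow> 'z \<Rightarrow> 'z) \<Rightarrow> ('z \<Rightarrow> 'z \<Rightarrow> real) \<Rightarrow> 'z measure \<Rightarrow> bool" where
  "invariant_prob_measure Z T \<rho> \<mu> \<longleftrightarrow>
     prob_space \<mu> \<and> space \<mu> = Z \<and> sets \<mu> = borel_sets_of (Metric_space.mtopology Z \<rho>) \<and>
     (\<forall>h. T h \<in> \<mu> \<rightarrow>\<^sub>M \<mu> \<and> distr \<mu> \<mu> (T h) = \<mu>)"

definition ergodic_measure ::
  "'z set \<Rightarrow> ('g \<Rightarrow> 'z \<Rightarrow> 'z) \<Rightarrow> ('z \<Rightarrow> 'z \<Rightarrow> real) \<Rightarrow> 'z measure \<Rightarrow> bool" where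
  "ergodic_measure Z T \<rho> \<mu> \<longleftrightarrow> invariant_prob_measure Z T \<rho> \<mu> \<and>
     (\<forall>A \<in> sets \<mu>. (\<forall>h. T h -` A \<inter> Z = A) \<longrightarrow> measure \<mu> A = 0 \<or> measure \<mu> A = 1)"

definition fin_meas_partition :: "'z measure \<Rightarrow> 'z set \<Rightarrow> 'z set set \<Rightarrow> bool" where
  "fin_meas_partition \<mu> Z P \<longleftrightarrow>
     finite P \<and> P \<subseteq> sets \<mu> \<and> {} \<notin> P \<and> \<Union>P = Z \<and> disjoint P"

definition set_diam :: "('z \<Rightarrow> 'z \<Rightarrow> real) \<Rightarrow> 'z set \<Rightarrow> real" where
  "set_diam \<rho> A = Sup {\<rho> x y | x y. x \<in> A \<and> y \<in> A}"

definition inner_nbhd :: "'z set \<Rightarrow> ('z \<Rightarrow> 'z \<Rightarrow> real) \<Rightarrow> real \<Rightarrow> 'z set \<Rightarrow> 'z set" where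
  "inner_nbhd Z \<rho> r A = {x \<in> A. \<exists>y \<in> Z - A. \<rho> x y < r}"

definition r_mu ::
  "'z set \<Rightarrow> ('z \<Rightarrow> 'z \<Rightarrow> real) \<Rightarrow> 'z measure \<Rightarrow> real \<Rightarrow> ereal" where
  "r_mu Z \<rho> \<mu> \<gamma> = Sup {ereal r | r. r > 0 \<and> (\<exists>P. fin_meas_partition \<mu> Z P \<and>
      measure \<mu> (\<Union>A\<in>P. Metric_space.mtopology Z \<rho> frontier_of A) = 0 \<and>
      (\<forall>A\<in>P. set_diam \<rho> A < \<gamma>) \<and>
      measure \<mu> (\<Union>A\<in>P. inner_nbhd Z \<rho> r A) < \<gamma>)}"

definition r_gamma ::
  "'z set \<Rightarrow> ('g \<Rightarrow> 'z \<Rightarrow> 'z) \<Rightarrow> ('z \<Rightarrow> 'z \<Rightarrow> real) \<Rightarrow> real \<Rightarrow> ereal" where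
  "r_gamma Z T \<rho> \<gamma> = Inf {r_mu Z \<rho> \<mu> \<gamma> | \<mu>. ergodic_measure Z T \<rho> \<mu>}"

definition condition_C :: "'z set \<Rightarrow> ('g \<Rightarrow> 'z \<Rightarrow> 'z) \<Rightarrow> ('z \<Rightarrow> 'z \<Rightarrow> real) \<Rightarrow> bool" where
  "condition_C Z T \<rho> \<longleftrightarrow> (\<forall>\<gamma>>0. r_gamma Z T \<rho> \<gamma> > 0) \<and>
     ((\<lambda>\<gamma>. ln (real_of_ereal (r_gamma Z T \<rho> \<gamma>)) / ln \<gamma>) \<longlongrightarrow> 1) (at_right 0)"

end

theory Submission
  imports Defs "HOL-Library.Set_Algebras"
begin

(*
  The lower bound: an e-separated set of X, placed independently on the coordinates of F and
  constant elsewhere, is e-separated in the Bowen metric over F, since the weight of the identity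
  coordinate is 1. This gives N(e)^|F| separated points.

  The upper bound: as the weights are summable, the metric on X^G is e/2-close to a weighted sum
  over a finite window K of coordinates, so e-separation in the Bowen metric over F is witnessed
  by the coordinates in K + F rounded to a (c e)-net of X, c = 1/(4 sum_g alpha_g). This gives at
  most N(c e)^|K + F| separated points, and |K + F_n| / |F_n| tends to 1 along a Foelner sequence.

  Finally, rescaling e by the constant c changes neither the upper nor the lower limit of
  log N(e) / |log e|.
*)

lemma
  assumes bounded: "\<And>S. sep_set Z \<rho> e S \<Longrightarrow> card S \<le> B"
  shows card_le_max_sep: "sep_set Z \<rho> e S \<Longrightarrow> card S \<le> max_sep Z \<rho> e"
    and max_sep_attained: "\<exists>S. sep_set Z \<rho> e S \<and> card S = max_sep Z \<rho> e"
proof -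
  let ?C = "card ` {S. sep_set Z \<rho> e S}"
  have fin: "finite ?C"
    unfolding finite_nat_set_iff_bounded_le using bounded by blast
  have ne: "?C \<noteq> {}"
    using sep_set_def[of Z \<rho> e "{}"] by auto
  have max_sep_eq: "max_sep Z \<rho> e = Max ?C"
    unfolding max_sep_def using cSup_eq_Max[OF fin ne] by simp
  show "sep_set Z \<rho> e S \<Longrightarrow> card S \<le> max_sep Z \<rho> e"
    unfolding max_sep_eq using fin by (intro Max_ge) auto
  show "\<exists>S. sep_set Z \<rho> e S \<and> card S = max_sep Z \<rho> e"
    using Max_in[OF fin ne] unfolding max_sep_eq by auto
qed

lemma max_sep_ge_1:
  assumes "x \<in> Z" and "\<And>S. sep_set Z \<rho> e S \<Longrightarrow> card S \<le> B"
  shows "1 \<le> max_sep Z \<rho> e"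
proof -
  have "sep_set Z \<rho> e {x}" using assms(1) by (simp add: sep_set_def)
  from card_le_max_sep[OF assms(2) this] show ?thesis by simp
qed

lemma compact_sep_set_card_bounded:
  assumes metric: "Metric_space X d" and compact: "compact_space (Metric_space.mtopology X d)"
    and "0 < e"
  shows "\<exists>B. \<forall>S. sep_set X d e S \<longrightarrow> card S \<le> B"
proof -
  interpret Metric_space X d by (rule metric)
  have "mtotally_bounded X"
    using compact compact_space_eq_mcomplete_mtotally_bounded by blast
  then obtain K where K: "finite K" "K \<subseteq> X" "X \<subseteq> (\<Union>x\<in>K. mball x (e/2))"
    unfolding mtotally_bounded_def using \<open>0 < e\<close> by (meson half_gt_zero)
  have "card S \<le> card K" if S: "sep_set X d e S" for S
  proof -
    define centre where "centre s = (SOME k. k \<in> K \<and> s \<in> mball k (e/2))" for s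
    have centre: "centre s \<in> K \<and> s \<in> mball (centre s) (e/2)" if "s \<in> S" for s
    proof -
      have "s \<in> X" using S that unfolding sep_set_def by auto
      then have "\<exists>k. k \<in> K \<and> s \<in> mball k (e/2)" using K by blast
      then show ?thesis unfolding centre_def by (rule someI_ex)
    qed
    have "inj_on centre S"
    proof (rule inj_onI, rule ccontr)
      fix s t assume st: "s \<in> S" "t \<in> S" "centre s = centre t" "s \<noteq> t"
      have "d s t > e" using S st unfolding sep_set_def by auto
      moreover have "d s t \<le> d s (centre s) + d (centre s) t"
        using centre[OF st(1)] centre[OF st(2)] st by (intro triangle) auto
      moreover have "d s (centre s) < e/2" "d (centre s) t < e/2"
        using centre[OF st(1)] centre[OF st(2)] st(3) by (auto simp: commute)
      ultimately show False by linarith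
    qed
    then show ?thesis using centre K(1) by (intro card_inj_on_le) auto
  qed
  then show ?thesis by blast
qed

lemma compact_max_sep_net:
  assumes metric: "Metric_space X d" and compact: "compact_space (Metric_space.mtopology X d)"
    and "0 < e"
  shows "\<exists>T. sep_set X d e T \<and> card T = max_sep X d e \<and> (\<forall>x\<in>X. \<exists>t\<in>T. d x t \<le> e)"
proof -
  interpret Metric_space X d by (rule metric)
  obtain B where B: "\<And>S. sep_set X d e S \<Longrightarrow> card S \<le> B"
    using compact_sep_set_card_bounded[OF metric compact \<open>0 < e\<close>] by blast
  obtain T where T: "sep_set X d e T" "card T = max_sep X d e"
    using max_sep_attained[OF B] by blast
  have "\<exists>t\<in>T. d x t \<le> e" if x: "x \<in> X" for x
  proof (rule ccontr)
    assume "\<not> ?thesis"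
    then have far: "\<forall>t\<in>T. d x t > e" by auto
    have "x \<notin> T" using far x \<open>0 < e\<close> by fastforce
    have "sep_set X d e (insert x T)"
      using T(1) far x unfolding sep_set_def by (auto simp: commute)
    then have "card (insert x T) \<le> max_sep X d e" using card_le_max_sep[OF B] by blast
    moreover have "finite T" using T(1) sep_set_def by auto
    ultimately show False using \<open>x \<notin> T\<close> T(2) by simp
  qed
  then show ?thesis using T by blast
qed

lemma compact_max_sep_ge_1:
  assumes "Metric_space X d" and "compact_space (Metric_space.mtopology X d)"
    and "0 < e" and "X \<noteq> {}"
  shows "1 \<le> max_sep X d e"
  using compact_sep_set_card_bounded[OF assms(1-3)] assms(4) max_sep_ge_1 by (metis ex_in_conv)

lemma compact_dist_bounded:
  assumes metric: "Metric_space X d" and compact: "compact_space (Metric_space.mtopology X d)"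
  shows "\<exists>D\<ge>0. \<forall>x\<in>X. \<forall>y\<in>X. d x y \<le> D"
proof -
  interpret Metric_space X d by (rule metric)
  have "mbounded X"
    using compact compactin_imp_mbounded by (simp add: compact_space_def)
  then show ?thesis
    unfolding mbounded_alt_pos by (auto intro: less_imp_le)
qed

lemma folner_card_set_plus_ratio:
  fixes F :: "nat \<Rightarrow> 'g::group_add set"
  assumes folner: "folner_seq F" and "finite K"
  shows "\<exists>r. r \<longlonglongrightarrow> 1 \<and> (\<forall>n. real (card (K + F n)) / real (card (F n)) \<le> r n)"
proof -
  define excess where "excess k n = real (card ((+) k ` F n - F n)) / real (card (F n))" for k n
  define r where "r n = 1 + (\<Sum>k\<in>K. excess k n)" for n
  have F: "finite (F n)" "F n \<noteq> {}" for n
    using folner unfolding folner_seq_def by auto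
  have "excess k \<longlonglongrightarrow> 0" for k
  proof (rule tendsto_sandwich[OF _ _ tendsto_const])
    let ?sym = "\<lambda>n. real (card (((+) k ` F n - F n) \<union> (F n - (+) k ` F n))) / real (card (F n))"
    show "?sym \<longlonglongrightarrow> 0"
      using folner unfolding folner_seq_def by blast
    show "\<forall>\<^sub>F n in sequentially. excess k n \<le> ?sym n"
      unfolding excess_def using F
      by (intro always_eventually allI divide_right_mono) (auto intro!: card_mono)
  qed (simp add: excess_def)
  then have "r \<longlonglongrightarrow> 1 + (\<Sum>k\<in>K. 0)"
    unfolding r_def by (intro tendsto_intros)
  moreover have "real (card (K + F n)) / real (card (F n)) \<le> r n" for n
  proof -
    have "K + F n \<subseteq> F n \<union> (\<Union>k\<in>K. (+) k ` F n - F n)"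
      by (auto simp: set_plus_def)
    then have "card (K + F n) \<le> card (F n \<union> (\<Union>k\<in>K. (+) k ` F n - F n))"
      using F \<open>finite K\<close> by (intro card_mono) auto
    also have "\<dots> \<le> card (F n) + (\<Sum>k\<in>K. card ((+) k ` F n - F n))"
      using card_UN_le[OF \<open>finite K\<close>] by (intro order.trans[OF card_Un_le] add_left_mono)
    finally have "real (card (K + F n)) \<le> real (card (F n)) + (\<Sum>k\<in>K. real (card ((+) k ` F n - F n)))"
      by (metis of_nat_add of_nat_le_iff of_nat_sum)
    moreover have "0 < real (card (F n))"
      using F by (simp add: card_gt_0_iff)
    ultimately show ?thesis
      unfolding r_def excess_def by (simp add: field_simps sum_divide_distrib[symmetric])
  qed
  ultimately show ?thesis by auto
qed

lemma bowen_metric_le_iff: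
  assumes "finite F" and "F \<noteq> {}"
  shows "bowen_metric \<rho> T F x y \<le> e \<longleftrightarrow> (\<forall>h\<in>F. \<rho> (T h x) (T h y) \<le> e)"
  unfolding bowen_metric_def using assms by (subst Max_le_iff) auto

lemma bowen_metric_ge:
  assumes "finite F" and "h \<in> F"
  shows "\<rho> (T h x) (T h y) \<le> bowen_metric \<rho> T F x y"
  unfolding bowen_metric_def using assms by (intro Max_ge) auto

lemma ereal_le_if_le_mult_one_plus:
  assumes le: "\<And>\<delta>::real. 0 < \<delta> \<Longrightarrow> a \<le> b * ereal (1 + \<delta>)" and "0 \<le> b"
  shows "a \<le> b"
proof (cases b)
  case (real r)
  have "0 \<le> r" using \<open>0 \<le> b\<close> real by simp
  show ?thesis
  proof (cases a)
    case (real s)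
    have real_le: "s \<le> r * (1 + \<delta>)" if "0 < \<delta>" for \<delta>
      using le[OF that] \<open>a = ereal s\<close> \<open>b = ereal r\<close> by simp
    have "s \<le> r + \<epsilon>" if "0 < \<epsilon>" for \<epsilon>
    proof -
      have "s \<le> r * (1 + \<epsilon> / (r + 1))"
        using \<open>0 \<le> r\<close> \<open>0 < \<epsilon>\<close> by (intro real_le) simp
      also have "\<dots> \<le> r + \<epsilon>"
        using \<open>0 \<le> r\<close> \<open>0 < \<epsilon>\<close> by (simp add: field_simps)
      finally show ?thesis .
    qed
    then show ?thesis using \<open>a = ereal s\<close> \<open>b = ereal r\<close> by (simp add: field_le_epsilon)
  next
    case PInf
    then show ?thesis using le[of 1] real by simp
  qed simp
qed (use assms in auto)

lemma tendsto_ln_ratio_rescaled: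
  fixes c :: real
  assumes "0 < c"
  shows "((\<lambda>e. \<bar>ln (c * e)\<bar> / \<bar>ln e\<bar>) \<longlongrightarrow> 1) (at_right 0)"
proof -
  have "filterlim ln at_infinity (at_right (0::real))"
    using ln_at_0 at_bot_le_at_infinity by (rule filterlim_mono) simp
  then have "((\<lambda>e. ln c / ln e) \<longlongrightarrow> 0) (at_right 0)"
    by (rule tendsto_divide_0[OF tendsto_const])
  then have "((\<lambda>e. 1 + ln c / ln e) \<longlongrightarrow> 1) (at_right 0)"
    using tendsto_add[OF tendsto_const] by fastforce
  moreover have "\<forall>\<^sub>F e in at_right 0. 1 + ln c / ln e = \<bar>ln (c * e)\<bar> / \<bar>ln e\<bar>"
  proof -
    have "\<forall>\<^sub>F e in at_right (0::real). 0 < e \<and> e < 1 \<and> c * e < 1"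
      using assms unfolding eventually_at_right_field
      by (intro exI[of _ "min 1 (1 / c)"]) (auto simp: field_simps)
    then show ?thesis
    proof eventually_elim
      case (elim e)
      then have "ln e < 0" "ln (c * e) < 0" using assms by simp_all
      then show ?case using assms elim by (simp add: ln_mult field_simps)
    qed
  qed
  ultimately show ?thesis by (rule Lim_transform_eventually)
qed

lemma
  fixes g :: "real \<Rightarrow> 'a::complete_lattice"
  assumes "0 < c"
  shows Limsup_at_right_0_rescale: "Limsup (at_right 0) (\<lambda>e. g (c * e)) = Limsup (at_right 0) g"
    and Liminf_at_right_0_rescale: "Liminf (at_right 0) (\<lambda>e. g (c * e)) = Liminf (at_right 0) g"
proof -
  have "inj ((*) c)" using assms by (auto intro: injI)
  moreover have "filtermap ((*) c) (at_right 0) = at_right 0"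
    using filtermap_times_pos_at_right[OF assms, of 0] by simp
  ultimately show "Limsup (at_right 0) (\<lambda>e. g (c * e)) = Limsup (at_right 0) g"
    and "Liminf (at_right 0) (\<lambda>e. g (c * e)) = Liminf (at_right 0) g"
    by (metis Limsup_filtermap_eq Liminf_filtermap_eq)+
qed

lemma eventually_le_rescaled_times_one_plus:
  fixes m :: "real \<Rightarrow> ereal" and u k :: "real \<Rightarrow> real"
  assumes "0 < c" and u_nonneg: "\<And>e. 0 < e \<Longrightarrow> 0 \<le> u e"
    and upper: "\<forall>\<^sub>F e in at_right 0. m e \<le> ereal (u (c * e) * k e)"
    and k: "(k \<longlongrightarrow> 1) (at_right 0)" and "0 < \<delta>"
  shows "\<forall>\<^sub>F e in at_right 0. m e \<le> ereal (u (c * e)) * ereal (1 + \<delta>)"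
proof -
  have "\<forall>\<^sub>F e in at_right 0. k e < 1 + \<delta>"
    using order_tendstoD(2)[OF k] \<open>0 < \<delta>\<close> by simp
  with upper eventually_at_right_less[of "0::real"] show ?thesis
  proof eventually_elim
    case (elim e)
    have "u (c * e) * k e \<le> u (c * e) * (1 + \<delta>)"
      using elim u_nonneg[of "c * e"] \<open>0 < c\<close> by (intro mult_left_mono) auto
    with elim show ?case by (simp add: order.trans)
  qed
qed

lemma Limsup_at_right_0_eq_if_rescaled_bounds:
  fixes m :: "real \<Rightarrow> ereal" and u k :: "real \<Rightarrow> real"
  assumes "0 < c" and u_nonneg: "\<And>e. 0 < e \<Longrightarrow> 0 \<le> u e"
    and lower: "\<forall>\<^sub>F e in at_right 0. ereal (u e) \<le> m e"
    and upper: "\<forall>\<^sub>F e in at_right 0. m e \<le> ereal (u (c * e) * k e)"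
    and k: "(k \<longlongrightarrow> 1) (at_right 0)"
  shows "Limsup (at_right 0) m = Limsup (at_right 0) (\<lambda>e. ereal (u e))"
proof (rule antisym)
  show "Limsup (at_right 0) (\<lambda>e. ereal (u e)) \<le> Limsup (at_right 0) m"
    using lower by (rule Limsup_mono)
  show "Limsup (at_right 0) m \<le> Limsup (at_right 0) (\<lambda>e. ereal (u e))"
  proof (rule ereal_le_if_le_mult_one_plus)
    fix \<delta> :: real assume "0 < \<delta>"
    have "Limsup (at_right 0) m \<le> Limsup (at_right 0) (\<lambda>e. ereal (u (c * e)) * ereal (1 + \<delta>))"
      using eventually_le_rescaled_times_one_plus[OF assms(1,2) upper k \<open>0 < \<delta>\<close>] by (rule Limsup_mono)
    also have "\<dots> = Limsup (at_right 0) (\<lambda>e. ereal (u (c * e))) * ereal (1 + \<delta>)"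
      using \<open>0 < \<delta>\<close> by (intro Limsup_ereal_mult_right) auto
    also have "\<dots> = Limsup (at_right 0) (\<lambda>e. ereal (u e)) * ereal (1 + \<delta>)"
      using Limsup_at_right_0_rescale[OF \<open>0 < c\<close>, of "\<lambda>e. ereal (u e)"] by simp
    finally show "Limsup (at_right 0) m \<le> Limsup (at_right 0) (\<lambda>e. ereal (u e)) * ereal (1 + \<delta>)" .
  next
    show "0 \<le> Limsup (at_right 0) (\<lambda>e. ereal (u e))"
      using eventually_mono[OF eventually_at_right_less[of "0::real"]] u_nonneg
      by (intro le_Limsup) auto
  qed
qed

lemma Liminf_at_right_0_eq_if_rescaled_bounds:
  fixes m :: "real \<Rightarrow> ereal" and u k :: "real \<Rightarrow> real"
  assumes "0 < c" and u_nonneg: "\<And>e. 0 < e \<Longrightarrow> 0 \<le> u e"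
    and lower: "\<forall>\<^sub>F e in at_right 0. ereal (u e) \<le> m e"
    and upper: "\<forall>\<^sub>F e in at_right 0. m e \<le> ereal (u (c * e) * k e)"
    and k: "(k \<longlongrightarrow> 1) (at_right 0)"
  shows "Liminf (at_right 0) m = Liminf (at_right 0) (\<lambda>e. ereal (u e))"
proof (rule antisym)
  show "Liminf (at_right 0) (\<lambda>e. ereal (u e)) \<le> Liminf (at_right 0) m"
    using lower by (rule Liminf_mono)
  show "Liminf (at_right 0) m \<le> Liminf (at_right 0) (\<lambda>e. ereal (u e))"
  proof (rule ereal_le_if_le_mult_one_plus)
    fix \<delta> :: real assume "0 < \<delta>"
    have "Liminf (at_right 0) m \<le> Liminf (at_right 0) (\<lambda>e. ereal (u (c * e)) * ereal (1 + \<delta>))"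
      using eventually_le_rescaled_times_one_plus[OF assms(1,2) upper k \<open>0 < \<delta>\<close>] by (rule Liminf_mono)
    also have "\<dots> = Liminf (at_right 0) (\<lambda>e. ereal (u (c * e))) * ereal (1 + \<delta>)"
      using \<open>0 < \<delta>\<close> by (intro Liminf_ereal_mult_right) auto
    also have "\<dots> = Liminf (at_right 0) (\<lambda>e. ereal (u e)) * ereal (1 + \<delta>)"
      using Liminf_at_right_0_rescale[OF \<open>0 < c\<close>, of "\<lambda>e. ereal (u e)"] by simp
    finally show "Liminf (at_right 0) m \<le> Liminf (at_right 0) (\<lambda>e. ereal (u e)) * ereal (1 + \<delta>)" .
  next
    show "0 \<le> Liminf (at_right 0) (\<lambda>e. ereal (u e))"
      using eventually_mono[OF eventually_at_right_less[of "0::real"]] u_nonneg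
      by (intro Liminf_bounded) auto
  qed
qed

locale weighted_full_shift =
  fixes X :: "'a set" and d :: "'a \<Rightarrow> 'a \<Rightarrow> real" and \<alpha> :: "'g::group_add \<Rightarrow> real"
  assumes metric: "Metric_space X d"
    and compact: "compact_space (Metric_space.mtopology X d)"
    and nonempty: "X \<noteq> {}"
    and weight_pos: "\<And>g. 0 < \<alpha> g"
    and weight_zero: "\<alpha> 0 = 1"
    and weight_summable: "\<alpha> summable_on UNIV"
begin

interpretation Metric_space X d by (rule metric)

abbreviation "Z \<equiv> full_shift_space X"
abbreviation "\<rho> \<equiv> shift_metric \<alpha> d"
abbreviation "total_weight \<equiv> infsum \<alpha> UNIV"
abbreviation "net_scale \<equiv> 1 / (4 * total_weight)"

lemma full_shift_space_coord: "x \<in> Z \<Longrightarrow> x g \<in> X"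
  unfolding full_shift_space_def by auto

lemma shift_in_full_shift_space: "x \<in> Z \<Longrightarrow> shift h x \<in> Z"
  unfolding full_shift_space_def shift_def by auto

lemma weight_summable_on: "\<alpha> summable_on B"
  using weight_summable by (rule summable_on_subset) simp

lemma sum_weight_le_total: "finite K \<Longrightarrow> sum \<alpha> K \<le> total_weight"
  using infsum_mono_neutral[of \<alpha> K \<alpha> UNIV] weight_summable_on weight_pos
  by (simp add: less_imp_le)

lemma total_weight_ge_1: "1 \<le> total_weight"
  using sum_weight_le_total[of "{0}"] weight_zero by simp

lemma weighted_dist_summable:
  assumes "x \<in> Z" and "y \<in> Z"
  shows "(\<lambda>g. \<alpha> g * d (x g) (y g)) summable_on B"
proof -
  obtain D where D: "\<And>a b. a \<in> X \<Longrightarrow> b \<in> X \<Longrightarrow> d a b \<le> D"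
    using compact_dist_bounded[OF metric compact] by blast
  show ?thesis
  proof (rule summable_on_comparison_test)
    show "(\<lambda>g. \<alpha> g * D) summable_on B"
      using weight_summable_on by (rule summable_on_cmult_left)
    show "\<alpha> g * d (x g) (y g) \<le> \<alpha> g * D" for g
      using D assms weight_pos[of g] by (intro mult_left_mono) (auto simp: full_shift_space_coord)
  qed (use weight_pos in \<open>simp add: less_imp_le\<close>)
qed

lemma dist_zero_coord_le_shift_metric:
  assumes "x \<in> Z" and "y \<in> Z"
  shows "d (x 0) (y 0) \<le> \<rho> x y"
proof -
  have "infsum (\<lambda>g. \<alpha> g * d (x g) (y g)) {0} \<le> infsum (\<lambda>g. \<alpha> g * d (x g) (y g)) UNIV"
    using weighted_dist_summable[OF assms] weight_pos
    by (intro infsum_mono_neutral) (auto simp: less_imp_le)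
  then show ?thesis unfolding shift_metric_def using weight_zero by simp
qed

lemma shift_metric_le_window_sum:
  assumes "0 < e"
  shows "\<exists>K. finite K \<and> (\<forall>x\<in>Z. \<forall>y\<in>Z. \<rho> x y \<le> (\<Sum>g\<in>K. \<alpha> g * d (x g) (y g)) + e/2)"
proof -
  obtain D where "0 \<le> D" and D: "\<And>a b. a \<in> X \<Longrightarrow> b \<in> X \<Longrightarrow> d a b \<le> D"
    using compact_dist_bounded[OF metric compact] by blast
  have "(\<alpha> has_sum total_weight) UNIV"
    using weight_summable by simp
  moreover have "0 < e / (2 * (D + 1))"
    using assms \<open>0 \<le> D\<close> by simp
  ultimately obtain K where K: "finite K" "dist (sum \<alpha> K) total_weight \<le> e / (2 * (D + 1))"
    by (meson has_sum_finite_approximation)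
  have tail: "infsum \<alpha> (-K) = total_weight - sum \<alpha> K"
    using infsum_Un_disjoint[of \<alpha> K "-K"] weight_summable_on K(1)
    by (simp add: Un_commute)
  have "D * (total_weight - sum \<alpha> K) \<le> (D + 1) * (e / (2 * (D + 1)))"
    using K(2) sum_weight_le_total[OF K(1)] \<open>0 \<le> D\<close> assms
    by (intro mult_mono) (auto simp: dist_real_def)
  also have "\<dots> = e/2"
    using \<open>0 \<le> D\<close> by (simp add: field_simps)
  finally have tail_small: "D * (total_weight - sum \<alpha> K) \<le> e/2" .
  have "\<rho> x y \<le> (\<Sum>g\<in>K. \<alpha> g * d (x g) (y g)) + e/2" if xy: "x \<in> Z" "y \<in> Z" for x y
  proof -
    let ?f = "\<lambda>g. \<alpha> g * d (x g) (y g)"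
    have "\<rho> x y = infsum ?f K + infsum ?f (-K)"
      unfolding shift_metric_def using infsum_Un_disjoint[of ?f K "-K"] weighted_dist_summable[OF xy]
      by (simp add: Un_commute)
    also have "infsum ?f K = (\<Sum>g\<in>K. ?f g)"
      using K(1) by simp
    also have "infsum ?f (-K) \<le> infsum (\<lambda>g. \<alpha> g * D) (-K)"
      using weighted_dist_summable[OF xy] weight_summable_on weight_pos D xy
      by (intro infsum_mono summable_on_cmult_left mult_left_mono)
         (auto simp: less_imp_le full_shift_space_coord)
    also have "\<dots> = D * (total_weight - sum \<alpha> K)"
      using infsum_cmult_left[of D \<alpha> "-K"] weight_summable_on tail by simp
    finally show ?thesis using tail_small by linarith
  qed
  then show ?thesis using K(1) by blast
qed

lemma bowen_metric_le_if_close_on_window: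
  assumes "0 < e" and "finite K"
    and window: "\<forall>x\<in>Z. \<forall>y\<in>Z. \<rho> x y \<le> (\<Sum>g\<in>K. \<alpha> g * d (x g) (y g)) + e/2"
    and F: "finite F" "F \<noteq> {}" and "x \<in> Z" and "y \<in> Z"
    and close: "\<And>g. g \<in> K + F \<Longrightarrow> d (x g) (y g) \<le> e / (2 * total_weight)"
  shows "bowen_metric \<rho> shift F x y \<le> e"
  unfolding bowen_metric_le_iff[OF F]
proof
  fix h assume "h \<in> F"
  have "\<rho> (shift h x) (shift h y) \<le> (\<Sum>g\<in>K. \<alpha> g * d (shift h x g) (shift h y g)) + e/2"
    using window shift_in_full_shift_space \<open>x \<in> Z\<close> \<open>y \<in> Z\<close> by blast
  also have "(\<Sum>g\<in>K. \<alpha> g * d (shift h x g) (shift h y g)) \<le> (\<Sum>g\<in>K. \<alpha> g * (e / (2 * total_weight)))"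
    using close weight_pos \<open>h \<in> F\<close> unfolding shift_def
    by (intro sum_mono mult_left_mono) (auto intro: less_imp_le set_plus_intro)
  also have "\<dots> = sum \<alpha> K * (e / (2 * total_weight))"
    by (rule sum_distrib_right[symmetric])
  also have "\<dots> \<le> total_weight * (e / (2 * total_weight))"
    using sum_weight_le_total[OF \<open>finite K\<close>] \<open>0 < e\<close> total_weight_ge_1 by (intro mult_right_mono) auto
  also have "\<dots> = e/2"
    using total_weight_ge_1 by simp
  finally show "\<rho> (shift h x) (shift h y) \<le> e"
    using \<open>0 < e\<close> by simp
qed

text \<open>Rounding the coordinates in \<open>K + F\<close> to the net \<open>T\<close> is injective on Bowen-separated sets.\<close>

lemma bowen_sep_set_card_le_net_power:
  assumes "0 < e" and "finite K"
    and window: "\<forall>x\<in>Z. \<forall>y\<in>Z. \<rho> x y \<le> (\<Sum>g\<in>K. \<alpha> g * d (x g) (y g)) + e/2"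
    and F: "finite F" "F \<noteq> {}"
    and S: "sep_set Z (bowen_metric \<rho> shift F) e S"
    and T: "T \<subseteq> X" "finite T" "\<forall>x\<in>X. \<exists>t\<in>T. d x t \<le> net_scale * e"
  shows "card S \<le> card T ^ card (K + F)"
proof -
  define round where "round x g = (SOME t. t \<in> T \<and> d (x g) t \<le> net_scale * e)" for x :: "'g \<Rightarrow> 'a" and g
  have round: "round x g \<in> T \<and> d (x g) (round x g) \<le> net_scale * e" if "x \<in> Z" for x g
  proof -
    have "\<exists>t. t \<in> T \<and> d (x g) t \<le> net_scale * e"
      using T(3) full_shift_space_coord[OF that] by blast
    then show ?thesis unfolding round_def by (rule someI_ex)
  qed
  define code where "code x = restrict (round x) (K + F)" for x
  have S_sub: "S \<subseteq> Z" "finite S"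
    using S unfolding sep_set_def by auto
  have "inj_on code S"
  proof (rule inj_onI, rule ccontr)
    fix x y assume xy: "x \<in> S" "y \<in> S" "code x = code y" "x \<noteq> y"
    have xZ: "x \<in> Z" and yZ: "y \<in> Z"
      using xy S_sub by auto
    have "d (x g) (y g) \<le> e / (2 * total_weight)" if "g \<in> K + F" for g
    proof -
      have "d (x g) (y g) \<le> d (x g) (round x g) + d (round x g) (y g)"
        using full_shift_space_coord[OF xZ] full_shift_space_coord[OF yZ] round[OF xZ] T(1)
        by (intro triangle) auto
      also have "\<dots> \<le> net_scale * e + net_scale * e"
        using round[OF xZ, of g] round[OF yZ, of g] fun_cong[OF xy(3), of g] that
        by (simp add: code_def commute)
      finally show ?thesis by simp
    qed
    then have "bowen_metric \<rho> shift F x y \<le> e"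
      by (rule bowen_metric_le_if_close_on_window[OF \<open>0 < e\<close> \<open>finite K\<close> window F xZ yZ])
    moreover have "e < bowen_metric \<rho> shift F x y"
      using S xy unfolding sep_set_def by auto
    ultimately show False by simp
  qed
  moreover have "code ` S \<subseteq> PiE (K + F) (\<lambda>_. T)"
    using S_sub round unfolding code_def by auto
  moreover have "finite (K + F)"
    using \<open>finite K\<close> F(1) by (rule finite_set_plus)
  ultimately have "card S \<le> card (PiE (K + F) (\<lambda>_. T))"
    using T(2) by (intro card_inj_on_le) (simp_all add: finite_PiE)
  also have "\<dots> = card T ^ card (K + F)"
    using \<open>finite (K + F)\<close> by (simp add: card_PiE)
  finally show ?thesis .
qed

lemma bowen_sep_set_card_le:
  assumes "0 < e" and "finite K"
    and window: "\<forall>x\<in>Z. \<forall>y\<in>Z. \<rho> x y \<le> (\<Sum>g\<in>K. \<alpha> g * d (x g) (y g)) + e/2"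
    and F: "finite F" "F \<noteq> {}"
    and S: "sep_set Z (bowen_metric \<rho> shift F) e S"
  shows "card S \<le> max_sep X d (net_scale * e) ^ card (K + F)"
proof -
  have "0 < net_scale * e"
    using \<open>0 < e\<close> total_weight_ge_1 by simp
  then obtain T where T: "sep_set X d (net_scale * e) T" "card T = max_sep X d (net_scale * e)"
    "\<forall>x\<in>X. \<exists>t\<in>T. d x t \<le> net_scale * e"
    using compact_max_sep_net[OF metric compact] by blast
  moreover have "T \<subseteq> X" "finite T"
    using T(1) unfolding sep_set_def by auto
  ultimately show ?thesis
    using bowen_sep_set_card_le_net_power[OF assms, of T] by metis
qed

lemma bowen_sep_set_product:
  assumes "0 < e" and F: "finite F" "F \<noteq> {}"
  shows "\<exists>E. sep_set Z (bowen_metric \<rho> shift F) e E \<and> card E = max_sep X d e ^ card F"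
proof -
  obtain S where S: "sep_set X d e S" "card S = max_sep X d e"
    using compact_max_sep_net[OF metric compact \<open>0 < e\<close>] by blast
  have S_sub: "S \<subseteq> X" "finite S"
    using S(1) unfolding sep_set_def by auto
  obtain x0 where x0: "x0 \<in> X"
    using nonempty by blast
  define extend where "extend f = (\<lambda>g. if g \<in> F then f g else x0)" for f :: "'g \<Rightarrow> 'a"
  define E where "E = extend ` PiE F (\<lambda>_. S)"
  have "inj_on extend (PiE F (\<lambda>_. S))"
  proof (rule inj_onI)
    fix f f' assume ff: "f \<in> PiE F (\<lambda>_. S)" "f' \<in> PiE F (\<lambda>_. S)" "extend f = extend f'"
    show "f = f'"
    proof (rule PiE_ext[OF ff(1,2)])
      fix g assume "g \<in> F"
      then show "f g = f' g" using fun_cong[OF ff(3), of g] unfolding extend_def by simp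
    qed
  qed
  then have card_E: "card E = card S ^ card F"
    unfolding E_def using F S_sub by (simp add: card_image card_PiE)
  have E_sub: "E \<subseteq> Z"
    using S_sub x0 unfolding E_def extend_def full_shift_space_def by (auto simp: PiE_iff subset_eq)
  have "finite E"
    unfolding E_def using F S_sub by (auto intro: finite_PiE)
  have "e < bowen_metric \<rho> shift F u v" if uv: "u \<in> E" "v \<in> E" "u \<noteq> v" for u v
  proof -
    obtain f f' where f: "f \<in> PiE F (\<lambda>_. S)" "f' \<in> PiE F (\<lambda>_. S)" "u = extend f" "v = extend f'"
      using uv(1,2) unfolding E_def by blast
    obtain g where g: "u g \<noteq> v g"
      using uv(3) by blast
    then have "g \<in> F"
      using f unfolding extend_def by auto
    then have "u g \<in> S" "v g \<in> S"
      using f unfolding extend_def by auto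
    then have "e < d (u g) (v g)"
      using S g unfolding sep_set_def by auto
    also have "d (u g) (v g) = d (shift g u 0) (shift g v 0)"
      unfolding shift_def by simp
    also have "\<dots> \<le> \<rho> (shift g u) (shift g v)"
      using uv E_sub by (intro dist_zero_coord_le_shift_metric shift_in_full_shift_space) auto
    also have "\<dots> \<le> bowen_metric \<rho> shift F u v"
      using F(1) \<open>g \<in> F\<close> by (rule bowen_metric_ge)
    finally show ?thesis .
  qed
  then have "sep_set Z (bowen_metric \<rho> shift F) e E"
    unfolding sep_set_def using E_sub \<open>finite E\<close> by auto
  then show ?thesis using card_E S(2) by auto
qed

definition scale_entropy :: "(nat \<Rightarrow> 'g set) \<Rightarrow> real \<Rightarrow> ereal" where
  "scale_entropy F e =
     limsup (\<lambda>n. ereal (ln (real (max_sep Z (bowen_metric \<rho> shift (F n)) e)) / real (card (F n))))"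

lemma upper_mdim_eq_Limsup_scale_entropy:
  "upper_mdim Z shift \<rho> F = Limsup (at_right 0) (\<lambda>e. scale_entropy F e * ereal (1 / \<bar>ln e\<bar>))"
  by (simp add: upper_mdim_def scale_entropy_def)

lemma lower_mdim_eq_Liminf_scale_entropy:
  "lower_mdim Z shift \<rho> F = Liminf (at_right 0) (\<lambda>e. scale_entropy F e * ereal (1 / \<bar>ln e\<bar>))"
  by (simp add: lower_mdim_def scale_entropy_def)

lemma bowen_sep_set_card_bounded:
  assumes "0 < e" and "finite F" and "F \<noteq> {}"
  shows "\<exists>B. \<forall>S. sep_set Z (bowen_metric \<rho> shift F) e S \<longrightarrow> card S \<le> B"
  using shift_metric_le_window_sum[OF assms(1)] bowen_sep_set_card_le[OF assms(1) _ _ assms(2,3)]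
  by blast

lemma scale_entropy_ge:
  assumes folner: "folner_seq F" and "0 < e"
  shows "ereal (ln (real (max_sep X d e))) \<le> scale_entropy F e"
proof -
  have F: "finite (F n)" "F n \<noteq> {}" for n
    using folner unfolding folner_seq_def by auto
  have N: "0 < real (max_sep X d e)"
    using compact_max_sep_ge_1[OF metric compact \<open>0 < e\<close> nonempty] by simp
  have "ln (real (max_sep X d e)) \<le> ln (real (max_sep Z (bowen_metric \<rho> shift (F n)) e)) / real (card (F n))"
    for n
  proof -
    obtain E where E: "sep_set Z (bowen_metric \<rho> shift (F n)) e E" "card E = max_sep X d e ^ card (F n)"
      using bowen_sep_set_product[OF \<open>0 < e\<close> F] by blast
    obtain B where "\<forall>S. sep_set Z (bowen_metric \<rho> shift (F n)) e S \<longrightarrow> card S \<le> B"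
      using bowen_sep_set_card_bounded[OF \<open>0 < e\<close> F] by blast
    then have "card E \<le> max_sep Z (bowen_metric \<rho> shift (F n)) e"
      using card_le_max_sep E(1) by metis
    then have "real (max_sep X d e) ^ card (F n) \<le> real (max_sep Z (bowen_metric \<rho> shift (F n)) e)"
      using E(2) by (metis of_nat_le_iff of_nat_power)
    then have "real (card (F n)) * ln (real (max_sep X d e)) \<le> ln (real (max_sep Z (bowen_metric \<rho> shift (F n)) e))"
      using N by (subst ln_realpow[symmetric]) (auto intro: ln_mono)
    moreover have "0 < real (card (F n))"
      using F by (simp add: card_gt_0_iff)
    ultimately show ?thesis by (simp add: field_simps)
  qed
  then have "limsup (\<lambda>n. ereal (ln (real (max_sep X d e)))) \<le> scale_entropy F e"
    unfolding scale_entropy_def by (intro Limsup_mono always_eventually) auto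
  then show ?thesis by (simp add: Limsup_const)
qed

text \<open>By the Foelner property \<open>|K + F\<^sub>n| / |F\<^sub>n| \<longrightarrow> 1\<close>, so the window \<open>K\<close> costs nothing.\<close>

lemma scale_entropy_le:
  assumes folner: "folner_seq F" and "0 < e"
  shows "scale_entropy F e \<le> ereal (ln (real (max_sep X d (net_scale * e))))"
proof -
  have F: "finite (F n)" "F n \<noteq> {}" for n
    using folner unfolding folner_seq_def by auto
  obtain K where K: "finite K" "\<forall>x\<in>Z. \<forall>y\<in>Z. \<rho> x y \<le> (\<Sum>g\<in>K. \<alpha> g * d (x g) (y g)) + e/2"
    using shift_metric_le_window_sum[OF \<open>0 < e\<close>] by blast
  obtain r where r: "r \<longlonglongrightarrow> 1" "\<And>n. real (card (K + F n)) / real (card (F n)) \<le> r n"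
    using folner_card_set_plus_ratio[OF folner K(1)] by blast
  define L where "L = ln (real (max_sep X d (net_scale * e)))"
  have "0 < net_scale * e"
    using \<open>0 < e\<close> total_weight_ge_1 by simp
  then have N: "1 \<le> real (max_sep X d (net_scale * e))"
    using compact_max_sep_ge_1[OF metric compact _ nonempty] by simp
  then have "0 \<le> L"
    unfolding L_def by simp
  have "ln (real (max_sep Z (bowen_metric \<rho> shift (F n)) e)) / real (card (F n)) \<le> r n * L" for n
  proof -
    obtain S where S: "sep_set Z (bowen_metric \<rho> shift (F n)) e S"
      "card S = max_sep Z (bowen_metric \<rho> shift (F n)) e"
      using max_sep_attained bowen_sep_set_card_bounded[OF \<open>0 < e\<close> F] by metis
    have "real (card S) \<le> real (max_sep X d (net_scale * e)) ^ card (K + F n)"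
      using bowen_sep_set_card_le[OF \<open>0 < e\<close> K F S(1)] by (metis of_nat_le_iff of_nat_power)
    then have "ln (real (card S)) \<le> real (card (K + F n)) * L"
      unfolding L_def using N
      by (cases "card S = 0") (auto simp: ln_realpow[symmetric] intro: ln_mono)
    then have "ln (real (card S)) / real (card (F n)) \<le> real (card (K + F n)) / real (card (F n)) * L"
      by (simp add: divide_right_mono)
    also have "\<dots> \<le> r n * L"
      using r(2)[of n] \<open>0 \<le> L\<close> by (rule mult_right_mono)
    finally show ?thesis using S(2) by simp
  qed
  then have "scale_entropy F e \<le> limsup (\<lambda>n. ereal (r n * L))"
    unfolding scale_entropy_def by (intro Limsup_mono always_eventually) auto
  also have "limsup (\<lambda>n. ereal (r n * L)) = ereal L"
    using r(1) by (intro lim_imp_Limsup) (auto intro!: tendsto_eq_intros)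
  finally show ?thesis unfolding L_def .
qed

definition box_ratio :: "real \<Rightarrow> real" where
  "box_ratio e = ln (real (max_sep X d e)) / \<bar>ln e\<bar>"

lemma upper_box_dim_eq_Limsup_box_ratio:
  "upper_box_dim X d = Limsup (at_right 0) (\<lambda>e. ereal (box_ratio e))"
  by (simp add: upper_box_dim_def box_ratio_def)

lemma lower_box_dim_eq_Liminf_box_ratio:
  "lower_box_dim X d = Liminf (at_right 0) (\<lambda>e. ereal (box_ratio e))"
  by (simp add: lower_box_dim_def box_ratio_def)

lemma box_ratio_nonneg: "0 < e \<Longrightarrow> 0 \<le> box_ratio e"
  using compact_max_sep_ge_1[OF metric compact _ nonempty] by (simp add: box_ratio_def)

lemma net_scale_pos: "0 < net_scale"
  using total_weight_ge_1 by simp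

lemma box_ratio_le_scale_entropy_ratio:
  assumes "folner_seq F" and "0 < e"
  shows "ereal (box_ratio e) \<le> scale_entropy F e * ereal (1 / \<bar>ln e\<bar>)"
  using ereal_mult_right_mono[OF scale_entropy_ge[OF assms], of "ereal (1 / \<bar>ln e\<bar>)"]
  by (simp add: box_ratio_def divide_inverse)

lemma scale_entropy_ratio_le_box_ratio_rescaled:
  assumes "folner_seq F" and "0 < e" and "e < 1"
  shows "scale_entropy F e * ereal (1 / \<bar>ln e\<bar>)
    \<le> ereal (box_ratio (net_scale * e) * (\<bar>ln (net_scale * e)\<bar> / \<bar>ln e\<bar>))"
proof -
  have "net_scale * e < 1 * 1"
    using assms total_weight_ge_1 by (intro mult_strict_mono) auto
  then have "ln (net_scale * e) \<noteq> 0"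
    using \<open>0 < e\<close> net_scale_pos by simp
  then show ?thesis
    using ereal_mult_right_mono[OF scale_entropy_le[OF assms(1,2)], of "ereal (1 / \<bar>ln e\<bar>)"]
    by (simp add: box_ratio_def)
qed

end

theorem mainTheorem6:
  fixes X :: "'a set" and d :: "'a \<Rightarrow> 'a \<Rightarrow> real"
    and \<alpha> :: "'g::{group_add, countable} \<Rightarrow> real"
    and F :: "nat \<Rightarrow> 'g set"
  assumes amen: "amenable TYPE('g)"
    and metr: "Metric_space X d"
    and comp: "compact_space (Metric_space.mtopology X d)"
    and ne: "X \<noteq> {}"
    and alpha_pos: "\<And>g. \<alpha> g > 0"
    and alpha_one: "\<alpha> 0 = 1"
    and alpha_sum: "\<alpha> summable_on UNIV"
    and C: "condition_C (full_shift_space X) shift (shift_metric \<alpha> d)"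
    and folner: "folner_seq F"
  shows "upper_mdim (full_shift_space X) shift (shift_metric \<alpha> d) F = upper_box_dim X d \<and>
         lower_mdim (full_shift_space X) shift (shift_metric \<alpha> d) F = lower_box_dim X d"
proof -
  interpret weighted_full_shift X d \<alpha>
    using metr comp ne alpha_pos alpha_one alpha_sum by (rule weighted_full_shift.intro)
  have small: "\<forall>\<^sub>F e in at_right 0. 0 < e \<and> e < (1::real)"
    unfolding eventually_at_right_field by (intro exI[of _ 1]) auto
  have lower: "\<forall>\<^sub>F e in at_right 0. ereal (box_ratio e) \<le> scale_entropy F e * ereal (1 / \<bar>ln e\<bar>)"
    using small by eventually_elim (blast intro: box_ratio_le_scale_entropy_ratio[OF folner])
  have upper: "\<forall>\<^sub>F e in at_right 0. scale_entropy F e * ereal (1 / \<bar>ln e\<bar>)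
      \<le> ereal (box_ratio (net_scale * e) * (\<bar>ln (net_scale * e)\<bar> / \<bar>ln e\<bar>))"
    using small by eventually_elim (blast intro: scale_entropy_ratio_le_box_ratio_rescaled[OF folner])
  note rescaled_bounds = net_scale_pos box_ratio_nonneg lower upper tendsto_ln_ratio_rescaled[OF net_scale_pos]
  show ?thesis
    unfolding upper_mdim_eq_Limsup_scale_entropy lower_mdim_eq_Liminf_scale_entropy
      upper_box_dim_eq_Limsup_box_ratio lower_box_dim_eq_Liminf_box_ratio
    using Limsup_at_right_0_eq_if_rescaled_bounds[OF rescaled_bounds]
      Liminf_at_right_0_eq_if_rescaled_bounds[OF rescaled_bounds]
    by simp
qed

end
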